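(* For every ProbNetKAT program $p$, the matrix $\mathcal{S}[\![p]\!]$ indexed by $2^{\mathsf{Pk}}\times 2^{\mathsf{Pk}}$ is (right-)stochastic: all entries are nonnegative and each row sums to $1$.
   Context: $\mathsf{Pk}$ is a finite set of packets (records of finitely many fields with finitely many values). For each ProbNetKAT program $p$, $\mathcal{B}[\![p]\!]\in[0,1]^{2^{\mathsf{Pk}}\times 2^{\mathsf{Pk}}}$ denotes its matrix semantics, defined compositionally ($[\varphi]$ = Iverson bracket): $\mathcal{B}[\![\mathsf{false}]\!]_{ab}=[b=\emptyset]$; $\mathcal{B}[\![\mathsf{true}]\!]_{ab}=[a=b]$; $\mathcal{B}[\![f=n]\!]_{ab}=[b=\{\pi\in a:\pi.f=n\}]$; $\mathcal{B}[\![\neg t]\!]_{ab}=[b\subseteq a]\mathcal{B}[\![t]\!]_{a,a-b}$; $\mathcal{B}[\![f\leftarrow n]\!]_{ab}=[b=\{\pi[f:=n]:\pi\in a\}]$; $\mathcal{B}[\![p\,\&\,q]\!]_{ab}=\sum_{c,d}[c\cup d=b]\mathcal{B}[\![p]\!]_{ac}\mathcal{B}[\![q]\!]_{ad}$; $\mathcal{B}[\![p;q]\!]=\mathcal{B}[\![p]\!]\mathcal{B}[\![q]\!]$; $\mathcal{B}[\![p\oplus_r q]\!]=r\mathcal{B}[\![p]\!]+(1-r)\mathcal{B}[\![q]\!]$; $\mathcal{B}[\![p^*]\!]_{ab}=\lim_n\mathcal{B}[\![p^{(n)}]\!]_{ab}$, where $p^{(0)}=\mathsf{true}$, $p^{(n+1)}=\mathsf{true}\,\&\,(p;p^{(n)})$.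 (Here $\&$ is union and $;$ sequencing; for predicates, $\&$ is disjunction and $;$ conjunction.) The small-step matrix is $\mathcal{S}[\![p]\!]_{(a,b),(a',b')} := [b'=b\cup a]\cdot\mathcal{B}[\![p]\!]_{a,a'}$ for $a,b,a',b'\subseteq\mathsf{Pk}$. *)

theory Defs
  imports Complex_Main
begin

text \<open>Packets are records with fields of (finite) type 'f and values of (finite) type 'v,
  i.e. functions 'f => 'v; Pk is UNIV of that type.\<close>

type_synonym ('f,'v) pk = "'f \<Rightarrow> 'v"
type_synonym ('f,'v) mat = "('f,'v) pk set \<Rightarrow> ('f,'v) pk set \<Rightarrow> real"

datatype ('f,'v) pred =
    PFalse
  | PTrue
  | Test 'f 'v
  | Neg "('f,'v) pred"
  | PDisj "('f,'v) pred" "('f,'v) pred"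
  | PConj "('f,'v) pred" "('f,'v) pred"

datatype ('f,'v) prog =
    Filter "('f,'v) pred"
  | Assign 'f 'v
  | Par "('f,'v) prog" "('f,'v) prog"
  | Seq "('f,'v) prog" "('f,'v) prog"
  | Choice "('f,'v) prog" real "('f,'v) prog"
  | Star "('f,'v) prog"

fun wf_prog :: "('f,'v) prog \<Rightarrow> bool" where
  "wf_prog (Filter t) = True"
| "wf_prog (Assign f n) = True"
| "wf_prog (Par p q) = (wf_prog p \<and> wf_prog q)"
| "wf_prog (Seq p q) = (wf_prog p \<and> wf_prog q)"
| "wf_prog (Choice p r q) = (0 \<le> r \<and> r \<le> 1 \<and> wf_prog p \<and> wf_prog q)"
| "wf_prog (Star p) = wf_prog p"

definition mat_id :: "('f::finite,'v::finite) mat" where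
  "mat_id a b = of_bool (a = b)"

definition mat_mult :: "('f::finite,'v::finite) mat \<Rightarrow> ('f,'v) mat \<Rightarrow> ('f,'v) mat" where
  "mat_mult A B a b = (\<Sum>c\<in>UNIV. A a c * B c b)"

definition mat_par :: "('f::finite,'v::finite) mat \<Rightarrow> ('f,'v) mat \<Rightarrow> ('f,'v) mat" where
  "mat_par A B a b = (\<Sum>(c,d)\<in>UNIV. of_bool (c \<union> d = b) * A a c * B a d)"

fun Bpred :: "('f::finite,'v::finite) pred \<Rightarrow> ('f,'v) mat" where
  "Bpred PFalse a b = of_bool (b = {})"
| "Bpred PTrue a b = of_bool (a = b)"
| "Bpred (Test f n) a b = of_bool (b = {\<pi>\<in>a. \<pi> f = n})"
| "Bpred (Neg t) a b = of_bool (b \<subseteq> a) * Bpred t a (a - b)"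
| "Bpred (PDisj t u) a b = mat_par (Bpred t) (Bpred u) a b"
| "Bpred (PConj t u) a b = mat_mult (Bpred t) (Bpred u) a b"

fun star_approx :: "('f::finite,'v::finite) mat \<Rightarrow> nat \<Rightarrow> ('f,'v) mat" where
  "star_approx P 0 = mat_id"
| "star_approx P (Suc n) = mat_par mat_id (mat_mult P (star_approx P n))"

fun B :: "('f::finite,'v::finite) prog \<Rightarrow> ('f,'v) mat" where
  "B (Filter t) = Bpred t"
| "B (Assign f n) = (\<lambda>a b. of_bool (b = (\<lambda>\<pi>. \<pi>(f := n)) ` a))"
| "B (Par p q) = mat_par (B p) (B q)"
| "B (Seq p q) = mat_mult (B p) (B q)"
| "B (Choice p r q) = (\<lambda>a b. r * B p a b + (1 - r) * B q a b)"
| "B (Star p) = (\<lambda>a b. lim (\<lambda>n. star_approx (B p) n a b))"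

definition S :: "('f::finite,'v::finite) prog \<Rightarrow> ('f,'v) pk set \<times> ('f,'v) pk set
                 \<Rightarrow> ('f,'v) pk set \<times> ('f,'v) pk set \<Rightarrow> real" where
  "S p = (\<lambda>(a,b) (a',b'). of_bool (b' = b \<union> a) * B p a a')"

end

theory Submission
  imports Defs
begin

(* Each matrix constructor preserves stochasticity; the only real work is the existence of the
   limit defining the star.  The approximants p^(n) need not converge monotonically entrywise,
   but the probability that p^(n) outputs a superset of a given set b is nondecreasing in n,
   because p^(n+1) = true & p;p^(n) only ever adds packets.  Being bounded by 1, these
   superset probabilities converge, and the entries themselves are recovered from them by
   downward induction on b.  For negation one uses that predicates only ever remove packets. *)

definition stochastic :: "('a::finite \<Rightarrow> 'a \<Rightarrow> real) \<Rightarrow> bool" where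
  "stochastic M \<longleftrightarrow> (\<forall>a b. 0 \<le> M a b) \<and> (\<forall>a. (\<Sum>b\<in>UNIV. M a b) = 1)"

lemma stochasticI:
  assumes "\<And>a b. 0 \<le> M a b" and "\<And>a. (\<Sum>b\<in>UNIV. M a b) = 1"
  shows "stochastic M"
  using assms unfolding stochastic_def by blast

lemma stochastic_nonneg: "stochastic M \<Longrightarrow> 0 \<le> M a b"
  unfolding stochastic_def by blast

lemma stochastic_row_sum: "stochastic M \<Longrightarrow> (\<Sum>b\<in>UNIV. M a b) = 1"
  unfolding stochastic_def by blast

lemma stochastic_mat_id: "stochastic mat_id"
  by (rule stochasticI) (simp_all add: mat_id_def)

lemma stochastic_mat_mult:
  assumes "stochastic M" and "stochastic N"
  shows "stochastic (mat_mult M N)"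
proof (rule stochasticI)
  show "0 \<le> mat_mult M N a b" for a b
    unfolding mat_mult_def using assms by (auto intro!: sum_nonneg simp: stochastic_nonneg)
  fix a
  have "(\<Sum>b\<in>UNIV. mat_mult M N a b) = (\<Sum>c\<in>UNIV. M a c * (\<Sum>b\<in>UNIV. N c b))"
    unfolding mat_mult_def sum_distrib_left by (rule sum.swap)
  also have "\<dots> = 1"
    using assms by (simp add: stochastic_row_sum)
  finally show "(\<Sum>b\<in>UNIV. mat_mult M N a b) = 1" .
qed

lemma stochastic_mat_par:
  assumes "stochastic M" and "stochastic N"
  shows "stochastic (mat_par M N)"
proof (rule stochasticI)
  show "0 \<le> mat_par M N a b" for a b
    unfolding mat_par_def using assms by (auto intro!: sum_nonneg simp: stochastic_nonneg)
  fix a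
  have "(\<Sum>b\<in>UNIV. mat_par M N a b)
      = (\<Sum>(c, d)\<in>UNIV. (\<Sum>b\<in>UNIV. of_bool (c \<union> d = b)) * M a c * N a d)"
    unfolding mat_par_def case_prod_beta sum_distrib_right by (rule sum.swap)
  also have "\<dots> = (\<Sum>c\<in>UNIV. M a c) * (\<Sum>d\<in>UNIV. N a d)"
    by (simp add: sum_product sum.cartesian_product case_prod_beta)
  also have "\<dots> = 1"
    using assms by (simp add: stochastic_row_sum)
  finally show "(\<Sum>b\<in>UNIV. mat_par M N a b) = 1" .
qed

lemma stochastic_convex_combination:
  assumes "stochastic M" and "stochastic N" and "0 \<le> r" and "r \<le> 1"
  shows "stochastic (\<lambda>a b. r * M a b + (1 - r) * N a b)"
  using assms by (intro stochasticI)
    (simp_all add: stochastic_nonneg stochastic_row_sum sum.distrib flip: sum_distrib_left)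

lemma mat_mult_nonzero_obtain:
  assumes "mat_mult M N a b \<noteq> 0"
  obtains c where "M a c \<noteq> 0" and "N c b \<noteq> 0"
proof -
  from assms obtain c where "M a c * N c b \<noteq> 0"
    unfolding mat_mult_def by (meson sum.not_neutral_contains_not_neutral)
  with that show thesis
    by auto
qed

lemma mat_par_nonzero_obtain:
  assumes "mat_par M N a b \<noteq> 0"
  obtains c d where "c \<union> d = b" and "M a c \<noteq> 0" and "N a d \<noteq> 0"
proof -
  from assms obtain cd
    where "of_bool (fst cd \<union> snd cd = b) * M a (fst cd) * N a (snd cd) \<noteq> 0"
    unfolding mat_par_def case_prod_beta by (meson sum.not_neutral_contains_not_neutral)
  with that show thesis
    by (auto split: if_splits)
qed

lemma Bpred_subset: "Bpred t a b \<noteq> 0 \<Longrightarrow> b \<subseteq> a"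
proof (induction t arbitrary: a b)
  case (PDisj t u)
  from PDisj.prems obtain c d where "c \<union> d = b" "Bpred t a c \<noteq> 0" "Bpred u a d \<noteq> 0"
    by (auto elim: mat_par_nonzero_obtain)
  with PDisj.IH show ?case
    by blast
next
  case (PConj t u)
  from PConj.prems obtain c where "Bpred t a c \<noteq> 0" "Bpred u c b \<noteq> 0"
    by (auto elim: mat_mult_nonzero_obtain)
  with PConj.IH show ?case
    by blast
qed (auto split: if_splits)

lemma sum_complement_subsets:
  fixes T :: "'a::finite set \<Rightarrow> real"
  assumes "\<And>b. T b \<noteq> 0 \<Longrightarrow> b \<subseteq> a"
  shows "(\<Sum>b\<in>UNIV. of_bool (b \<subseteq> a) * T (a - b)) = (\<Sum>b\<in>UNIV. T b)"
proof -
  have "(\<Sum>b\<in>UNIV. of_bool (b \<subseteq> a) * T (a - b)) = (\<Sum>b\<in>Pow a. T (a - b))"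
    by (rule sum.mono_neutral_cong_right) auto
  also have "\<dots> = (\<Sum>c\<in>Pow a. T c)"
    by (rule sum.reindex_bij_witness[where i="\<lambda>c. a - c" and j="\<lambda>b. a - b"]) auto
  also have "\<dots> = (\<Sum>b\<in>UNIV. T b)"
    using assms by (intro sum.mono_neutral_cong_left) auto
  finally show ?thesis .
qed

lemma stochastic_Bpred: "stochastic (Bpred t)"
proof (induction t)
  case (Neg t)
  show ?case
  proof (rule stochasticI)
    show "0 \<le> Bpred (Neg t) a b" for a b
      using Neg by (simp add: stochastic_nonneg)
    show "(\<Sum>b\<in>UNIV. Bpred (Neg t) a b) = 1" for a
    proof -
      have "(\<Sum>b\<in>UNIV. Bpred (Neg t) a b) = (\<Sum>b\<in>UNIV. Bpred t a b)"
        unfolding Bpred.simps by (rule sum_complement_subsets) (rule Bpred_subset)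
      with Neg show ?thesis
        by (simp add: stochastic_row_sum)
    qed
  qed
next
  case (PDisj t u)
  then show ?case
    using stochastic_mat_par[of "Bpred t" "Bpred u"] by (simp add: fun_eq_iff)
next
  case (PConj t u)
  then show ?case
    using stochastic_mat_mult[of "Bpred t" "Bpred u"] by (simp add: fun_eq_iff)
qed (simp_all add: stochastic_def)

lemma stochastic_star_approx: "stochastic P \<Longrightarrow> stochastic (star_approx P n)"
  by (induction n) (auto intro: stochastic_mat_par stochastic_mat_mult stochastic_mat_id)

definition superset_mass :: "('x \<Rightarrow> 'a::finite set \<Rightarrow> real) \<Rightarrow> 'x \<Rightarrow> 'a set \<Rightarrow> real" where
  "superset_mass M a b = (\<Sum>c | b \<subseteq> c. M a c)"

lemma superset_mass_mat_id: "superset_mass mat_id a b = of_bool (b \<subseteq> a)"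
  by (simp add: superset_mass_def mat_id_def of_bool_def sum.delta')

lemma superset_mass_mat_mult:
  "superset_mass (mat_mult P X) a b = (\<Sum>e\<in>UNIV. P a e * superset_mass X e b)"
  unfolding superset_mass_def mat_mult_def sum_distrib_left by (rule sum.swap)

lemma mat_par_mat_id: "mat_par mat_id M a c = (\<Sum>d\<in>UNIV. of_bool (a \<union> d = c) * M a d)"
proof -
  have "mat_par mat_id M a c
      = (\<Sum>c'\<in>UNIV. of_bool (a = c') * (\<Sum>d\<in>UNIV. of_bool (c' \<union> d = c) * M a d))"
    unfolding mat_par_def mat_id_def sum.cartesian_product[symmetric] UNIV_Times_UNIV[symmetric]
      sum_distrib_left by (simp add: mult_ac)
  also have "\<dots> = (\<Sum>d\<in>UNIV. of_bool (a \<union> d = c) * M a d)"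
    by simp
  finally show ?thesis .
qed

lemma superset_mass_mat_par_mat_id:
  "superset_mass (mat_par mat_id M) a b = superset_mass M a (b - a)"
proof -
  have "superset_mass (mat_par mat_id M) a b
      = (\<Sum>d\<in>UNIV. (\<Sum>c | b \<subseteq> c. of_bool (a \<union> d = c)) * M a d)"
    unfolding superset_mass_def mat_par_mat_id sum_distrib_right by (rule sum.swap)
  also have "\<dots> = (\<Sum>d\<in>UNIV. of_bool (b - a \<subseteq> d) * M a d)"
    by (intro sum.cong refl) (auto simp: of_bool_def sum.delta')
  also have "\<dots> = superset_mass M a (b - a)"
    by (simp add: superset_mass_def)
  finally show ?thesis .
qed

lemma superset_mass_star_approx_Suc:
  "superset_mass (star_approx P (Suc n)) a b
     = (\<Sum>e\<in>UNIV. P a e * superset_mass (star_approx P n) e (b - a))"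
  by (simp add: superset_mass_mat_par_mat_id superset_mass_mat_mult)

lemma superset_mass_le_1:
  assumes "stochastic M"
  shows "superset_mass M a b \<le> 1"
proof -
  have "superset_mass M a b \<le> (\<Sum>c\<in>UNIV. M a c)"
    unfolding superset_mass_def using assms by (intro sum_mono2) (auto simp: stochastic_nonneg)
  with assms show ?thesis
    by (simp add: stochastic_row_sum)
qed

lemma superset_mass_star_approx_mono:
  assumes "stochastic P"
  shows "superset_mass (star_approx P n) a b \<le> superset_mass (star_approx P (Suc n)) a b"
proof (induction n arbitrary: a b)
  case 0
  have "superset_mass mat_id a b = (\<Sum>e\<in>UNIV. P a e * superset_mass mat_id a b)"
    using assms by (simp add: stochastic_row_sum flip: sum_distrib_right)
  also have "\<dots> \<le> (\<Sum>e\<in>UNIV. P a e * superset_mass mat_id e (b - a))"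
    using assms by (intro sum_mono mult_left_mono) (auto simp: superset_mass_mat_id stochastic_nonneg)
  finally show ?case
    by (simp only: superset_mass_star_approx_Suc star_approx.simps(1))
next
  case (Suc n)
  then show ?case
    using assms
    unfolding superset_mass_star_approx_Suc[of P "Suc n"] superset_mass_star_approx_Suc[of P n]
    by (intro sum_mono mult_left_mono) (auto simp: stochastic_nonneg)
qed

lemma convergent_superset_mass_star_approx:
  assumes "stochastic P"
  shows "convergent (\<lambda>n. superset_mass (star_approx P n) a b)"
proof -
  have "incseq (\<lambda>n. superset_mass (star_approx P n) a b)"
    using superset_mass_star_approx_mono[OF assms] by (rule incseq_SucI)
  moreover have "superset_mass (star_approx P n) a b \<le> 1" for n
    using assms by (intro superset_mass_le_1 stochastic_star_approx)
  ultimately show ?thesis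
    unfolding convergent_def by (meson incseq_convergent)
qed

lemma convergent_of_convergent_superset_mass:
  fixes X :: "nat \<Rightarrow> 'x \<Rightarrow> 'a::finite set \<Rightarrow> real"
  assumes "\<And>b. convergent (\<lambda>n. superset_mass (X n) a b)"
  shows "convergent (\<lambda>n. X n a b)"
proof (induction b rule: measure_induct_rule[where f="\<lambda>b. card (- b)"])
  case (less b)
  have supersets_convergent: "convergent (\<lambda>n. \<Sum>c | b \<subset> c. X n a c)"
  proof (intro convergent_sum less)
    fix c assume "c \<in> {c. b \<subset> c}"
    then show "card (- c) < card (- b)"
      by (intro psubset_card_mono) auto
  qed
  have eq: "X n a b = superset_mass (X n) a b - (\<Sum>c | b \<subset> c. X n a c)" for n
  proof -
    have "{c. b \<subseteq> c} = insert b {c. b \<subset> c}"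
      by auto
    then show ?thesis
      by (simp add: superset_mass_def)
  qed
  have "convergent (\<lambda>n. superset_mass (X n) a b - (\<Sum>c | b \<subset> c. X n a c))"
    using assms supersets_convergent by (rule convergent_diff)
  with eq show ?case
    by simp
qed

lemma stochastic_limit:
  assumes "\<And>n. stochastic (X n)" and "\<And>a b. (\<lambda>n. X n a b) \<longlonglongrightarrow> L a b"
  shows "stochastic L"
proof (rule stochasticI)
  show "0 \<le> L a b" for a b
    using assms by (intro LIMSEQ_le_const[OF assms(2)]) (simp add: stochastic_nonneg)
  fix a
  have "(\<lambda>n. \<Sum>b\<in>UNIV. X n a b) \<longlonglongrightarrow> (\<Sum>b\<in>UNIV. L a b)"
    by (intro tendsto_sum assms(2))
  with assms(1) show "(\<Sum>b\<in>UNIV. L a b) = 1"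
    by (simp add: stochastic_row_sum LIMSEQ_const_iff)
qed

lemma stochastic_lim_star_approx:
  assumes "stochastic P"
  shows "stochastic (\<lambda>a b. lim (\<lambda>n. star_approx P n a b))"
proof (rule stochastic_limit)
  show "stochastic (star_approx P n)" for n
    using assms by (rule stochastic_star_approx)
  show "(\<lambda>n. star_approx P n a b) \<longlonglongrightarrow> lim (\<lambda>n. star_approx P n a b)" for a b
    using convergent_of_convergent_superset_mass[OF convergent_superset_mass_star_approx[OF assms]]
    by (simp add: convergent_LIMSEQ_iff)
qed

lemma stochastic_B: "wf_prog p \<Longrightarrow> stochastic (B p)"
proof (induction p)
  case (Filter t)
  then show ?case
    by (simp add: stochastic_Bpred)
next
  case (Assign f n)
  then show ?case
    by (simp add: stochastic_def)
qed (simp_all add: stochastic_mat_par stochastic_mat_mult stochastic_convex_combination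
    stochastic_lim_star_approx)

lemma stochastic_S:
  assumes "stochastic (B p)"
  shows "stochastic (S p)"
proof (rule stochasticI)
  show "0 \<le> S p s t" for s t
    using assms by (auto simp: S_def stochastic_nonneg case_prod_beta)
  fix s :: "('a, 'b) pk set \<times> ('a, 'b) pk set"
  obtain a b where s: "s = (a, b)"
    by fastforce
  have "(\<Sum>t\<in>UNIV. S p s t) = (\<Sum>a'\<in>UNIV. \<Sum>b'\<in>UNIV. of_bool (b' = b \<union> a) * B p a a')"
    unfolding s S_def sum.cartesian_product UNIV_Times_UNIV by (simp add: case_prod_beta)
  also have "\<dots> = (\<Sum>a'\<in>UNIV. B p a a')"
    by simp
  also have "\<dots> = 1"
    using assms by (rule stochastic_row_sum)
  finally show "(\<Sum>t\<in>UNIV. S p s t) = 1" .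
qed

theorem lemma4p1:
  fixes p :: "('f::finite, 'v::finite) prog"
  assumes "wf_prog p"
  shows "(\<forall>s t. 0 \<le> S p s t) \<and> (\<forall>s. (\<Sum>t\<in>UNIV. S p s t) = 1)"
  using stochastic_S[OF stochastic_B[OF assms]] unfolding stochastic_def .

end
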